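(* Let $p\ge 2$ be an integer, let $0<d_1,\dots,d_p<\tfrac12$, and let $(X_t)_{t\in\mathbb{Z}}$ be a PtvARFIMA process with period $p$ and memory parameters $d_1,\dots,d_p$ (as defined in the context). Consider the $\mathbb{R}^p$-valued series $X_m=(X_{1+pm},\dots,X_{p+pm})^{T}$, $m\in\mathbb{Z}$. Then $\{X_m\}_{m\in\mathbb{Z}}$ is a $p$-variate second-order stationary long memory time series: its autocovariance entries satisfy, as $h\to\infty$, $$\gamma_X^{i,k}(h)\simeq \sigma_i^2\, \big(h^{D-\frac12 I}\,R\,h^{D-\frac12 I}\big)_{i,k}=\sigma_i^2\,R^{i,k}\,h^{d_i+d_k-1},\qquad i,k=1,\dots,p,$$ where $D=\mathrm{diag}(d_1,\dots,d_p)$, $R=(R^{i,k})_{i,k=1}^p$ with $R^{i,k}>0$ for all $i,k$, and for $a>0$ and a diagonal matrix $N=\mathrm{diag}(n_1,\dots,n_p)$ one writes $a^N=\mathrm{diag}(a^{n_1},\dots,a^{n_p})$.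
   Context: Let $B$ denote the backshift operator, $B^jX_t=X_{t-j}$. Let $(\varepsilon_t)_{t\in\mathbb{Z}}$ be a sequence of independent random variables with mean zero and finite variances $\sigma_t^2$ that are periodic: $\sigma_{t+p}^2=\sigma_t^2$. Every $t\in\mathbb{Z}$ is written uniquely as $t=i+pm$ with $i\in\{1,\dots,p\}$, $m\in\mathbb{Z}$; write $\sigma_i^2$ for the variance in season $i$. A PtvARFIMA (periodic ARFIMA$(0,d_i,0)$) process with period $p$ and memory parameters $d_1,\dots,d_p$ (extended periodically, $d_{t+p}=d_t$) is a process satisfying $(1-B)^{d_i}X_{i+pm}=\varepsilon_{i+pm}$, i.e. (when $d_i<\tfrac12$) given by the moving-average representation $X_{i+pm}=\sum_{j=0}^{\infty}\psi_j^i\,\varepsilon_{i+pm-j}$ with $\psi_j^i=\frac{\Gamma(j+d_i)}{\Gamma(j+1)\Gamma(d_i)}$; these satisfy $\psi_j^i\sim v_i j^{d_i-1}$ as $j\to\infty$ with $v_i>0$. The notation $\gamma_X^{i,k}(h)$ denotes the $(i,k)$ entry of the lag-$h$ autocovariance matrix of the vector series $X_m$. *)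

theory Defs
  imports "HOL-Probability.Probability" "HOL-Library.Landau_Symbols"
begin

text \<open>MA(infinity) coefficients of the ARFIMA(0,d,0) filter (1-B)^(-d):
  psi_j = Gamma(j+d) / (Gamma(j+1) Gamma(d)).\<close>
definition arfima_psi :: "real \<Rightarrow> nat \<Rightarrow> real" where
  "arfima_psi d j = Gamma (real j + d) / (Gamma (real j + 1) * Gamma d)"

end

theory Submission
  imports Defs
begin

text \<open>
  For \<open>t = s + N\<close> the covariance of the linear process is the lag sum
  \<open>\<Sum>\<^sub>l \<sigma>\<^sup>2(s - l) \<psi>\<^sup>a(l + N) \<psi>\<^sup>b(l)\<close> with \<open>a = d(t)\<close>, \<open>b = d(s)\<close>. For unit weights the lag sum
  \<open>S(N)\<close> obeys the first-order recursion \<open>(N + 1 - b) S(N + 1) = (N + a) S(N)\<close>, a telescoping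
  consequence of the recursions of \<open>\<psi>\<^sup>a\<close> and \<open>\<psi>\<^sup>b\<close>, so \<open>S(N) = S(0) \<psi>\<^sup>a(N) / \<psi>\<^bsup>1 - b\<^esub>(N)\<close>,
  which is asymptotic to \<open>S(0) \<Gamma>(1 - b) / \<Gamma>(a) N powr (a + b - 1)\<close>. A periodic weight
  \<open>\<sigma>\<^sup>2\<close> changes this only through its mean over a period, up to an error of order \<open>\<psi>\<^sup>a(N)\<close>.
  Along the lags \<open>N = p h + i - k\<close> this gives the power law \<open>h powr (d(i) + d(k) - 1)\<close>.
\<close>

section \<open>The fractional filter coefficients\<close>

lemma arfima_psi_pochhammer:
  assumes "d > 0"
  shows "arfima_psi d n = pochhammer d n / fact n"
proof -
  have "d \<notin> \<int>\<^sub>\<le>\<^sub>0" using assms by (auto elim!: nonpos_Ints_cases)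
  then have "pochhammer d n = Gamma (real n + d) / Gamma d"
    by (simp add: pochhammer_Gamma add.commute)
  moreover have "Gamma (real n + 1) = fact n"
    using Gamma_fact[of n] by (simp add: add.commute)
  ultimately show ?thesis
    using Gamma_real_pos[OF assms] by (simp add: arfima_psi_def)
qed

lemma arfima_psi_0: "d > 0 \<Longrightarrow> arfima_psi d 0 = 1"
  by (simp add: arfima_psi_pochhammer)

lemma arfima_psi_Suc:
  "d > 0 \<Longrightarrow> arfima_psi d (Suc j) = arfima_psi d j * (real j + d) / (real j + 1)"
  by (simp add: arfima_psi_pochhammer pochhammer_Suc field_simps add.commute)

lemma arfima_psi_pos: "d > 0 \<Longrightarrow> arfima_psi d j > 0"
  by (induction j) (simp_all add: arfima_psi_0 arfima_psi_Suc)

lemma arfima_psi_decseq: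
  assumes "0 < d" "d \<le> 1"
  shows "decseq (arfima_psi d)"
proof (rule decseq_SucI)
  fix n
  show "arfima_psi d (Suc n) \<le> arfima_psi d n"
    using arfima_psi_pos[OF assms(1), of n] assms
    by (simp add: arfima_psi_Suc field_simps mult_left_le)
qed

lemma arfima_psi_shift_le: "0 < d \<Longrightarrow> d \<le> 1 \<Longrightarrow> arfima_psi d (j + k) \<le> arfima_psi d j"
  by (rule decseqD[OF arfima_psi_decseq]) simp_all

text \<open>For \<open>n > 0\<close>, \<open>\<psi>(n) = n powr (d - 1) / \<Gamma>\<^sub>n(d)\<close> with Euler's approximants
  \<open>\<Gamma>\<^sub>n(d) = Gamma_series' d n \<longrightarrow> \<Gamma>(d)\<close>.\<close>
lemma arfima_psi_asymp_equiv:
  assumes "d > 0"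
  shows "arfima_psi d \<sim>[at_top] (\<lambda>n. real n powr (d - 1) / Gamma d)"
proof (rule asymp_equivI')
  have "eventually (\<lambda>n. Gamma d / Gamma_series' d n =
      arfima_psi d n / (real n powr (d - 1) / Gamma d)) at_top"
    using eventually_gt_at_top[of "0::nat"]
  proof eventually_elim
    case (elim n)
    then have "fact n = real n * fact (n - 1)"
      by (metis fact_num_eq_if of_nat_fact of_nat_mult not_gr0)
    moreover have "real n powr (d - 1) = real n powr d / real n"
      using elim by (simp add: powr_diff)
    ultimately show ?case
      using elim pochhammer_pos[OF assms, of n] Gamma_real_pos[OF assms]
      by (simp add: Gamma_series'_def arfima_psi_pochhammer[OF assms] powr_def field_simps)
  qed
  moreover have "(\<lambda>n. Gamma d / Gamma_series' d n) \<longlonglongrightarrow> Gamma d / Gamma d"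
    using Gamma_real_pos[OF assms] by (intro tendsto_intros Gamma_series'_LIMSEQ) simp
  ultimately show "(\<lambda>n. arfima_psi d n / (real n powr (d - 1) / Gamma d)) \<longlonglongrightarrow> 1"
    using Gamma_real_pos[OF assms] by (simp add: tendsto_cong)
qed

lemma arfima_psi_product_asymp_equiv:
  assumes "a > 0" "b > 0"
  shows "(\<lambda>n. arfima_psi a n * arfima_psi b n)
    \<sim>[at_top] (\<lambda>n. real n powr (a + b - 2) / (Gamma a * Gamma b))"
proof -
  have "(\<lambda>n. arfima_psi a n * arfima_psi b n)
      \<sim>[at_top] (\<lambda>n. real n powr (a - 1) / Gamma a * (real n powr (b - 1) / Gamma b))"
    by (intro asymp_equiv_mult arfima_psi_asymp_equiv assms)
  also have "eventually (\<lambda>n. real n powr (a - 1) / Gamma a * (real n powr (b - 1) / Gamma b)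
      = real n powr (a + b - 2) / (Gamma a * Gamma b)) at_top"
    using eventually_gt_at_top[of "0::nat"]
    by eventually_elim (simp add: powr_add[symmetric])
  then have "(\<lambda>n. real n powr (a - 1) / Gamma a * (real n powr (b - 1) / Gamma b))
      \<sim>[at_top] (\<lambda>n. real n powr (a + b - 2) / (Gamma a * Gamma b))"
    by (rule asymp_equiv_refl_ev)
  finally show ?thesis .
qed

lemma arfima_psi_tendsto_0:
  assumes "0 < d" "d < 1"
  shows "arfima_psi d \<longlonglongrightarrow> 0"
proof (rule asymp_equiv_tendsto_transfer[OF asymp_equiv_symI[OF arfima_psi_asymp_equiv[OF assms(1)]]])
  show "(\<lambda>n. real n powr (d - 1) / Gamma d) \<longlonglongrightarrow> 0"
    using assms by (intro tendsto_divide_zero tendsto_neg_powr filterlim_real_sequentially) auto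
qed

lemma arfima_psi_ratio_asymp_equiv:
  assumes "a > 0" "b < 1"
  shows "(\<lambda>N. arfima_psi a N / arfima_psi (1 - b) N)
    \<sim>[at_top] (\<lambda>N. Gamma (1 - b) / Gamma a * real N powr (a + b - 1))"
proof -
  have "(\<lambda>N. arfima_psi a N / arfima_psi (1 - b) N)
      \<sim>[at_top] (\<lambda>N. (real N powr (a - 1) / Gamma a) / (real N powr ((1 - b) - 1) / Gamma (1 - b)))"
    using assms by (intro asymp_equiv_divide arfima_psi_asymp_equiv) simp_all
  also have "eventually (\<lambda>N. (real N powr (a - 1) / Gamma a) / (real N powr ((1 - b) - 1) / Gamma (1 - b))
      = Gamma (1 - b) / Gamma a * real N powr (a + b - 1)) at_top"
    using eventually_gt_at_top[of "0::nat"]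
  proof eventually_elim
    case (elim N)
    then have "real N powr (a + b - 1) = real N powr (a - 1) / real N powr ((1 - b) - 1)"
      by (simp add: powr_diff[symmetric] algebra_simps)
    then show ?case by simp
  qed
  then have "(\<lambda>N. (real N powr (a - 1) / Gamma a) / (real N powr ((1 - b) - 1) / Gamma (1 - b)))
      \<sim>[at_top] (\<lambda>N. Gamma (1 - b) / Gamma a * real N powr (a + b - 1))"
    by (rule asymp_equiv_refl_ev)
  finally show ?thesis .
qed

section \<open>Lag sums of filter coefficients\<close>

definition arfima_lag_sum :: "real \<Rightarrow> real \<Rightarrow> nat \<Rightarrow> real" where
  "arfima_lag_sum a b N = (\<Sum>u. arfima_psi a (u + N) * arfima_psi b u)"

lemma summable_arfima_lag_product:
  assumes "a > 0" "b > 0" "a + b < 1"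
  shows "summable (\<lambda>u. arfima_psi a (u + N) * arfima_psi b u)"
proof (rule summable_comparison_test)
  have "summable (\<lambda>n. norm (real n powr (a + b - 2) / (Gamma a * Gamma b)))"
    using assms by (simp add: summable_real_powr_iff abs_mult)
  then show "summable (\<lambda>u. arfima_psi a u * arfima_psi b u)"
    by (rule summable_comparison_test_bigo)
       (rule asymp_equiv_imp_bigo[OF arfima_psi_product_asymp_equiv[OF assms(1,2)]])
  show "\<exists>N'. \<forall>u\<ge>N'. norm (arfima_psi a (u + N) * arfima_psi b u) \<le> arfima_psi a u * arfima_psi b u"
    using assms arfima_psi_pos[of a] arfima_psi_pos[of b] arfima_psi_shift_le[of a]
    by (intro exI[of _ 0] allI impI) (simp add: abs_mult mult_right_mono less_imp_le)
qed

lemma arfima_lag_product_tendsto_0: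
  assumes "a > 0" "b > 0" "a + b < 1"
  shows "(\<lambda>U. real U * (arfima_psi a (U + N) * arfima_psi b U)) \<longlonglongrightarrow> 0"
proof (rule Lim_null_comparison)
  show "eventually (\<lambda>U. norm (real U * (arfima_psi a (U + N) * arfima_psi b U))
      \<le> real U * (arfima_psi a U * arfima_psi b U)) at_top"
  proof (intro always_eventually allI)
    fix U
    have "arfima_psi a (U + N) * arfima_psi b U \<le> arfima_psi a U * arfima_psi b U"
      using assms arfima_psi_pos[of b U] arfima_psi_shift_le[of a U N] by simp
    then have "real U * (arfima_psi a (U + N) * arfima_psi b U)
        \<le> real U * (arfima_psi a U * arfima_psi b U)"
      by (rule mult_left_mono) simp
    then show "norm (real U * (arfima_psi a (U + N) * arfima_psi b U))
        \<le> real U * (arfima_psi a U * arfima_psi b U)"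
      using assms arfima_psi_pos[of a "U + N"] arfima_psi_pos[of b U] by simp
  qed
  have "(\<lambda>U. real U * (arfima_psi a U * arfima_psi b U))
      \<sim>[at_top] (\<lambda>U. real U * (real U powr (a + b - 2) / (Gamma a * Gamma b)))"
    by (intro asymp_equiv_mult asymp_equiv_refl arfima_psi_product_asymp_equiv assms)
  moreover have "(\<lambda>U. real U * (real U powr (a + b - 2) / (Gamma a * Gamma b))) \<longlonglongrightarrow> 0"
  proof (rule Lim_transform_eventually)
    show "(\<lambda>U. real U powr (a + b - 1) / (Gamma a * Gamma b)) \<longlonglongrightarrow> 0"
      using assms by (intro tendsto_divide_zero tendsto_neg_powr filterlim_real_sequentially) auto
    show "eventually (\<lambda>U. real U powr (a + b - 1) / (Gamma a * Gamma b)
        = real U * (real U powr (a + b - 2) / (Gamma a * Gamma b))) at_top"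
      using eventually_gt_at_top[of "0::nat"]
    proof eventually_elim
      case (elim U)
      then have "real U * real U powr (a + b - 2) = real U powr (1 + (a + b - 2))"
        by (simp add: powr_mult_base)
      then show ?case by simp
    qed
  qed
  ultimately show "(\<lambda>U. real U * (arfima_psi a U * arfima_psi b U)) \<longlonglongrightarrow> 0"
    by (rule asymp_equiv_tendsto_transfer[OF asymp_equiv_symI])
qed

text \<open>Termwise, \<open>(N + 1 - b) \<psi>\<^sup>a(u + N + 1) \<psi>\<^sup>b(u) = (N + a) \<psi>\<^sup>a(u + N) \<psi>\<^sup>b(u) + g u - g (u + 1)\<close>
  with \<open>g u = u \<psi>\<^sup>a(u + N) \<psi>\<^sup>b(u)\<close>, by the first-order recursions of \<open>\<psi>\<^sup>a\<close> and \<open>\<psi>\<^sup>b\<close>; the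
  differences telescope, and \<open>g 0 = 0\<close>, \<open>g U \<longrightarrow> 0\<close>.\<close>
lemma arfima_lag_sum_Suc:
  assumes "a > 0" "b > 0" "a + b < 1"
  shows "(real N + 1 - b) * arfima_lag_sum a b (Suc N) = (real N + a) * arfima_lag_sum a b N"
proof -
  define g where "g u = real u * (arfima_psi a (u + N) * arfima_psi b u)" for u
  have step: "(real N + 1 - b) * (arfima_psi a (u + Suc N) * arfima_psi b u)
      = (real N + a) * (arfima_psi a (u + N) * arfima_psi b u) + (g u - g (Suc u))" for u
  proof -
    have "arfima_psi a (u + Suc N) * (real u + real N + 1) = arfima_psi a (u + N) * (real u + real N + a)"
      using arfima_psi_Suc[OF assms(1), of "u + N"] by (simp add: field_simps)
    moreover have "arfima_psi b (Suc u) * (real u + 1) = arfima_psi b u * (real u + b)"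
      using arfima_psi_Suc[OF assms(2), of u] by (simp add: field_simps)
    ultimately show ?thesis
      unfolding g_def by (simp add: algebra_simps) algebra
  qed
  have partial: "(real N + 1 - b) * (\<Sum>u<U. arfima_psi a (u + Suc N) * arfima_psi b u)
      = (real N + a) * (\<Sum>u<U. arfima_psi a (u + N) * arfima_psi b u) - g U" for U
  proof -
    have "(real N + 1 - b) * (\<Sum>u<U. arfima_psi a (u + Suc N) * arfima_psi b u)
        = (\<Sum>u<U. (real N + a) * (arfima_psi a (u + N) * arfima_psi b u) + (g u - g (Suc u)))"
      unfolding sum_distrib_left by (rule sum.cong[OF refl step])
    also have "\<dots> = (real N + a) * (\<Sum>u<U. arfima_psi a (u + N) * arfima_psi b u) + (g 0 - g U)"
      by (simp add: sum.distrib sum_distrib_left sum_lessThan_telescope')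
    finally show ?thesis by (simp add: g_def)
  qed
  have "(\<lambda>U. (real N + 1 - b) * (\<Sum>u<U. arfima_psi a (u + Suc N) * arfima_psi b u))
      \<longlonglongrightarrow> (real N + 1 - b) * arfima_lag_sum a b (Suc N)"
    unfolding arfima_lag_sum_def
    by (intro tendsto_intros summable_LIMSEQ summable_arfima_lag_product assms)
  moreover have "(\<lambda>U. (real N + a) * (\<Sum>u<U. arfima_psi a (u + N) * arfima_psi b u) - g U)
      \<longlonglongrightarrow> (real N + a) * arfima_lag_sum a b N - 0"
    unfolding arfima_lag_sum_def g_def
    by (intro tendsto_intros summable_LIMSEQ summable_arfima_lag_product
        arfima_lag_product_tendsto_0 assms)
  ultimately show ?thesis
    unfolding partial by (simp add: LIMSEQ_unique)
qed

lemma arfima_lag_sum_eq: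
  assumes "a > 0" "b > 0" "a + b < 1"
  shows "arfima_lag_sum a b N = arfima_lag_sum a b 0 * arfima_psi a N / arfima_psi (1 - b) N"
proof (induction N)
  case 0
  then show ?case using assms by (simp add: arfima_psi_0)
next
  case (Suc N)
  have b: "1 - b > 0" "real N + 1 - b > 0" using assms by simp_all
  have "arfima_lag_sum a b (Suc N) = arfima_lag_sum a b N * (real N + a) / (real N + 1 - b)"
    using arfima_lag_sum_Suc[OF assms, of N] b by (simp add: field_simps)
  also have "\<dots> = arfima_lag_sum a b 0 * (arfima_psi a N * (real N + a))
      / (arfima_psi (1 - b) N * (real N + (1 - b)))"
    unfolding Suc using arfima_psi_pos[OF b(1), of N] b by (simp add: field_simps)
  also have "\<dots> = arfima_lag_sum a b 0 * (arfima_psi a N * (real N + a) / (real N + 1))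
      / (arfima_psi (1 - b) N * (real N + (1 - b)) / (real N + 1))"
    by simp
  also have "\<dots> = arfima_lag_sum a b 0 * arfima_psi a (Suc N) / arfima_psi (1 - b) (Suc N)"
    by (simp add: arfima_psi_Suc[OF assms(1)] arfima_psi_Suc[OF b(1)])
  finally show ?case .
qed

lemma arfima_lag_sum_0_pos:
  assumes "a > 0" "b > 0" "a + b < 1"
  shows "arfima_lag_sum a b 0 > 0"
proof -
  have "0 < (\<Sum>u<1. arfima_psi a (u + 0) * arfima_psi b u)"
    using assms by (simp add: arfima_psi_0)
  also have "\<dots> \<le> arfima_lag_sum a b 0"
    unfolding arfima_lag_sum_def using summable_arfima_lag_product[OF assms, of 0] arfima_psi_pos assms
    by (intro sum_le_suminf) (auto intro!: mult_nonneg_nonneg less_imp_le)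
  finally show ?thesis .
qed

section \<open>Periodically weighted lag sums\<close>

lemma periodic_nat_shift:
  assumes "\<And>u. w (u + p) = w (u::nat)"
  shows "w (u + q * p) = w u"
proof (induction q)
  case (Suc q)
  have "w (u + Suc q * p) = w ((u + q * p) + p)" by (simp add: algebra_simps)
  with Suc show ?case by (simp add: assms)
qed simp

lemma periodic_block_sum:
  assumes "\<And>u. w (u + p) = w (u::nat)"
  shows "(\<Sum>u\<in>{q*p..<q*p+p}. w u) = (\<Sum>r<p. w r)"
proof -
  have "(\<Sum>u\<in>{q*p..<q*p+p}. w u) = (\<Sum>r<p. w (r + q*p))"
    by (rule sum.reindex_bij_witness[of _ "\<lambda>r. r + q*p" "\<lambda>u. u - q*p"]) auto
  then show ?thesis by (simp add: periodic_nat_shift[of w p, OF assms])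
qed

lemma periodic_weighted_block_bound:
  fixes P w :: "nat \<Rightarrow> real"
  assumes "p > 0" "decseq P"
    and wper: "\<And>u. w (u + p) = w u" and "\<And>u. w u \<ge> 0"
  defines "W \<equiv> \<Sum>r<p. w r"
  shows "\<bar>(\<Sum>u\<in>{q*p..<q*p+p}. w u * P u) - W / real p * (\<Sum>u\<in>{q*p..<q*p+p}. P u)\<bar>
    \<le> W * (P (q*p) - P (q*p+p))"
proof -
  let ?B = "{q*p..<q*p+p}"
  have P: "P (q*p+p) \<le> P u" "P u \<le> P (q*p)" if "u \<in> ?B" for u
    using that assms(2) by (simp_all add: decseqD)
  have "W * P (q*p+p) = (\<Sum>u\<in>?B. w u * P (q*p+p))"
    by (simp add: W_def periodic_block_sum[of w p, OF wper] flip: sum_distrib_right)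
  also have "\<dots> \<le> (\<Sum>u\<in>?B. w u * P u)"
    using P assms(4) by (intro sum_mono mult_left_mono) auto
  finally have A1: "W * P (q*p+p) \<le> (\<Sum>u\<in>?B. w u * P u)" .
  have "(\<Sum>u\<in>?B. w u * P u) \<le> (\<Sum>u\<in>?B. w u * P (q*p))"
    using P assms(4) by (intro sum_mono mult_left_mono) auto
  also have "\<dots> = W * P (q*p)"
    by (simp add: W_def periodic_block_sum[of w p, OF wper] flip: sum_distrib_right)
  finally have A2: "(\<Sum>u\<in>?B. w u * P u) \<le> W * P (q*p)" .
  have B1: "real p * P (q*p+p) \<le> (\<Sum>u\<in>?B. P u)" and B2: "(\<Sum>u\<in>?B. P u) \<le> real p * P (q*p)"
    using sum_mono[of ?B "\<lambda>_. P (q*p+p)" P] sum_mono[of ?B P "\<lambda>_. P (q*p)"] P by auto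
  have "W \<ge> 0" unfolding W_def using assms(4) by (simp add: sum_nonneg)
  then have "W * P (q*p+p) \<le> W / real p * (\<Sum>u\<in>?B. P u)" "W / real p * (\<Sum>u\<in>?B. P u) \<le> W * P (q*p)"
    using mult_left_mono[OF B1, of "W / real p"] mult_left_mono[OF B2, of "W / real p"] assms(1)
    by simp_all
  with A1 A2 show ?thesis by (simp add: abs_le_iff right_diff_distrib)
qed

text \<open>On each block \<open>[q p, q p + p)\<close> both sums lie between \<open>W P(q p + p)\<close> and \<open>W P(q p)\<close>;
  the block errors telescope.\<close>
lemma periodic_weighted_suminf_approx:
  fixes P w :: "nat \<Rightarrow> real"
  assumes p: "p > 0" and P: "decseq P" "summable P"
    and wper: "\<And>u. w (u + p) = w u" and wnn: "\<And>u. w u \<ge> 0"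
  shows "summable (\<lambda>u. w u * P u)"
    and "\<bar>(\<Sum>u. w u * P u) - (\<Sum>r<p. w r) / real p * (\<Sum>u. P u)\<bar> \<le> (\<Sum>r<p. w r) * P 0"
proof -
  define W where "W = (\<Sum>r<p. w r)"
  have Pnn: "P u \<ge> 0" for u
    using P by (intro decseq_ge[OF P(1)] summable_LIMSEQ_zero)
  have wle: "w u \<le> W" for u
  proof -
    have "w u = w (u mod p + (u div p) * p)" by simp
    also have "\<dots> = w (u mod p)" by (rule periodic_nat_shift[of w p, OF wper])
    also have "\<dots> \<le> W" unfolding W_def using p wnn by (intro member_le_sum) auto
    finally show ?thesis .
  qed
  show ws: "summable (\<lambda>u. w u * P u)"
    by (rule summable_comparison_test[OF _ summable_mult[OF P(2), of W]])
       (use wle wnn Pnn in \<open>auto intro!: exI[of _ 0] mult_right_mono simp: abs_mult\<close>)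
  define E where "E q = (\<Sum>u\<in>{q*p..<q*p+p}. w u * P u) - W / real p * (\<Sum>u\<in>{q*p..<q*p+p}. P u)" for q
  have Es: "E sums ((\<Sum>u. w u * P u) - W / real p * (\<Sum>u. P u))"
    unfolding E_def by (intro sums_diff sums_mult sums_group summable_sums ws P(2) p)
  have T: "(\<lambda>q. W * (P (q*p) - P (Suc q * p))) sums (W * (P (0 * p) - 0))"
    using LIMSEQ_subseq_LIMSEQ[OF summable_LIMSEQ_zero[OF P(2)], of "\<lambda>q. q * p"] p
    by (intro sums_mult telescope_sums') (simp_all add: strict_mono_def o_def)
  have E: "\<bar>E q\<bar> \<le> W * (P (q*p) - P (Suc q * p))" for q
    using periodic_weighted_block_bound[of p P w q, OF p P(1) wper wnn] by (simp add: E_def W_def add.commute)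
  have "summable (\<lambda>q. \<bar>E q\<bar>)"
    by (rule summable_comparison_test[OF _ sums_summable[OF T]]) (use E in auto)
  then have "\<bar>\<Sum>q. E q\<bar> \<le> (\<Sum>q. \<bar>E q\<bar>)"
    by (rule summable_rabs)
  also have "\<dots> \<le> (\<Sum>q. W * (P (q*p) - P (Suc q * p)))"
    by (rule suminf_le[OF E \<open>summable (\<lambda>q. \<bar>E q\<bar>)\<close> sums_summable[OF T]])
  finally have "\<bar>\<Sum>q. E q\<bar> \<le> (\<Sum>q. W * (P (q*p) - P (Suc q * p)))" .
  then show "\<bar>(\<Sum>u. w u * P u) - (\<Sum>r<p. w r) / real p * (\<Sum>u. P u)\<bar> \<le> (\<Sum>r<p. w r) * P 0"
    using sums_unique[OF Es] sums_unique[OF T] by (simp add: W_def)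
qed

definition arfima_weighted_lag_sum :: "real \<Rightarrow> real \<Rightarrow> (nat \<Rightarrow> real) \<Rightarrow> nat \<Rightarrow> real" where
  "arfima_weighted_lag_sum a b w N = (\<Sum>u. w u * (arfima_psi a (u + N) * arfima_psi b u))"

lemma arfima_weighted_lag_sum_approx:
  assumes ab: "a > 0" "b > 0" "a + b < 1" and p: "p > 0"
    and wper: "\<And>u. w (u + p) = w u" and wnn: "\<And>u. w u \<ge> 0"
  shows "\<bar>arfima_weighted_lag_sum a b w N - (\<Sum>r<p. w r) / real p * arfima_lag_sum a b N\<bar>
    \<le> (\<Sum>r<p. w r) * arfima_psi a N"
proof -
  have "\<bar>arfima_weighted_lag_sum a b w N - (\<Sum>r<p. w r) / real p * arfima_lag_sum a b N\<bar>
      \<le> (\<Sum>r<p. w r) * (arfima_psi a (0 + N) * arfima_psi b 0)"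
    unfolding arfima_weighted_lag_sum_def arfima_lag_sum_def
  proof (rule periodic_weighted_suminf_approx(2)[of p "\<lambda>u. arfima_psi a (u + N) * arfima_psi b u" w,
        OF p _ summable_arfima_lag_product[OF ab] wper wnn])
    show "decseq (\<lambda>u. arfima_psi a (u + N) * arfima_psi b u)"
      using ab arfima_psi_pos[of a] arfima_psi_pos[of b]
        decseqD[OF arfima_psi_decseq[of a]] decseqD[OF arfima_psi_decseq[of b]]
      by (intro decseq_SucI mult_mono) (auto intro: less_imp_le)
  qed
  then show ?thesis using ab by (simp add: arfima_psi_0)
qed

text \<open>Replacing the periodic weight by its mean costs at most \<open>W \<psi>\<^sup>a(N)\<close>, which is negligible
  against the main term \<open>K \<psi>\<^sup>a(N) / \<psi>\<^bsup>1 - b\<^esub>(N)\<close> coming from the closed form of the lag sum.\<close>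
lemma arfima_weighted_lag_sum_asymp_equiv:
  assumes ab: "a > 0" "b > 0" "a + b < 1" and p: "p > 0"
    and wper: "\<And>u. w (u + p) = w u" and wnn: "\<And>u. w u \<ge> 0" and Wpos: "(\<Sum>r<p. w r) > 0"
  defines "K \<equiv> (\<Sum>r<p. w r) / real p * arfima_lag_sum a b 0"
  shows "arfima_weighted_lag_sum a b w
    \<sim>[at_top] (\<lambda>N. K * (Gamma (1 - b) / Gamma a) * real N powr (a + b - 1))"
proof -
  have b: "1 - b > 0" "b < 1" using ab by auto
  have "K > 0" unfolding K_def using Wpos p arfima_lag_sum_0_pos[OF ab] by simp
  have err: "\<bar>arfima_weighted_lag_sum a b w N * arfima_psi (1 - b) N / arfima_psi a N - K\<bar>
      \<le> (\<Sum>r<p. w r) * arfima_psi (1 - b) N" for N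
  proof -
    have pos: "arfima_psi a N > 0" "arfima_psi (1 - b) N > 0"
      using arfima_psi_pos ab b by auto
    have "(\<Sum>r<p. w r) / real p * arfima_lag_sum a b N = K * arfima_psi a N / arfima_psi (1 - b) N"
      unfolding K_def arfima_lag_sum_eq[OF ab, of N] by simp
    with arfima_weighted_lag_sum_approx[of a b p w N, OF ab p wper wnn]
    have approx: "\<bar>arfima_weighted_lag_sum a b w N - K * arfima_psi a N / arfima_psi (1 - b) N\<bar>
        \<le> (\<Sum>r<p. w r) * arfima_psi a N"
      by simp
    have "\<bar>arfima_weighted_lag_sum a b w N * arfima_psi (1 - b) N / arfima_psi a N - K\<bar>
        = \<bar>arfima_weighted_lag_sum a b w N - K * arfima_psi a N / arfima_psi (1 - b) N\<bar>
          * (arfima_psi (1 - b) N / arfima_psi a N)"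
      using pos by (simp add: abs_mult[symmetric] field_simps)
    also have "\<dots> \<le> (\<Sum>r<p. w r) * arfima_psi a N * (arfima_psi (1 - b) N / arfima_psi a N)"
      using approx pos by (intro mult_right_mono) simp_all
    also have "\<dots> = (\<Sum>r<p. w r) * arfima_psi (1 - b) N"
      using pos by simp
    finally show ?thesis .
  qed
  have "(\<lambda>N. arfima_weighted_lag_sum a b w N * arfima_psi (1 - b) N / arfima_psi a N - K) \<longlonglongrightarrow> 0"
  proof (rule Lim_null_comparison[OF always_eventually])
    show "\<forall>N. norm (arfima_weighted_lag_sum a b w N * arfima_psi (1 - b) N / arfima_psi a N - K)
        \<le> (\<Sum>r<p. w r) * arfima_psi (1 - b) N"
      using err by simp
    show "(\<lambda>N. (\<Sum>r<p. w r) * arfima_psi (1 - b) N) \<longlonglongrightarrow> 0"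
      using ab by (intro tendsto_mult_right_zero arfima_psi_tendsto_0) auto
  qed
  then have "(\<lambda>N. arfima_weighted_lag_sum a b w N / (arfima_psi a N / arfima_psi (1 - b) N)) \<longlonglongrightarrow> K"
    by (simp add: LIM_zero_iff)
  then have "arfima_weighted_lag_sum a b w \<sim>[at_top] (\<lambda>N. K * (arfima_psi a N / arfima_psi (1 - b) N))"
    using \<open>K > 0\<close> by (intro asymp_equivI'_const) simp_all
  also have "\<dots> \<sim>[at_top] (\<lambda>N. K * (Gamma (1 - b) / Gamma a * real N powr (a + b - 1)))"
    by (intro asymp_equiv_mult asymp_equiv_refl arfima_psi_ratio_asymp_equiv ab b)
  finally show ?thesis by (simp add: mult.assoc)
qed

lemma filterlim_nat_affine:
  fixes q :: nat and c :: int
  assumes "q > 0"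
  shows "filterlim (\<lambda>h. nat (int q * int h + c)) sequentially sequentially"
  unfolding filterlim_at_top
proof
  fix Z
  show "eventually (\<lambda>h. Z \<le> nat (int q * int h + c)) sequentially"
    using eventually_ge_at_top[of "Z + nat \<bar>c\<bar>"]
  proof eventually_elim
    case (elim h)
    have "h \<le> q * h" using assms by simp
    then have "int h \<le> int q * int h" by (metis of_nat_le_iff of_nat_mult)
    then show ?case using elim by linarith
  qed
qed

lemma asymp_equiv_powr_compose_affine:
  fixes f :: "nat \<Rightarrow> real" and q :: nat and c :: int
  assumes f: "f \<sim>[at_top] (\<lambda>N. K * real N powr e)" and q: "q > 0"
  shows "(\<lambda>h. f (nat (int q * int h + c))) \<sim>[at_top] (\<lambda>h. K * real q powr e * real h powr e)"
proof -
  define N where "N h = nat (int q * int h + c)" for h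
  have N_lim: "filterlim N sequentially sequentially"
    unfolding N_def using q by (rule filterlim_nat_affine)
  have "(\<lambda>h. real (N h)) \<sim>[at_top] (\<lambda>h. real q * real h)"
  proof (rule asymp_equivI')
    have "(\<lambda>h. 1 + real_of_int c / real q * inverse (real h)) \<longlonglongrightarrow> 1 + real_of_int c / real q * 0"
      by (intro tendsto_intros tendsto_inverse_0_at_top filterlim_real_sequentially)
    moreover have "eventually (\<lambda>h. 1 + real_of_int c / real q * inverse (real h)
        = real (N h) / (real q * real h)) at_top"
      using eventually_ge_at_top[of "nat \<bar>c\<bar> + 1"]
    proof eventually_elim
      case (elim h)
      have "h \<le> q * h" using q by simp
      then have "int h \<le> int q * int h" by (metis of_nat_le_iff of_nat_mult)
      then have "int q * int h + c \<ge> 0" using elim by linarith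
      then have "real (N h) = real q * real h + real_of_int c"
        unfolding N_def by (simp add: of_nat_nat)
      then show ?case using elim q by (simp add: field_simps)
    qed
    ultimately show "(\<lambda>h. real (N h) / (real q * real h)) \<longlonglongrightarrow> 1"
      by (simp add: tendsto_cong)
  qed
  then have "(\<lambda>h. K * real (N h) powr e) \<sim>[at_top] (\<lambda>h. K * (real q * real h) powr e)"
    by (intro asymp_equiv_mult asymp_equiv_refl asymp_equiv_powr_real) auto
  then have "(\<lambda>h. f (N h)) \<sim>[at_top] (\<lambda>h. K * (real q * real h) powr e)"
    using asymp_equiv_compose'[OF f N_lim] by (rule asymp_equiv_trans[rotated])
  then show ?thesis
    unfolding N_def by (simp add: powr_mult mult.assoc)
qed

section \<open>Products of square-integrable functions\<close>

lemma abs_mult_le_sum_squares: "\<bar>a * b\<bar> \<le> a\<^sup>2 + b\<^sup>2" for a b :: real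
proof -
  have "2 * \<bar>a\<bar> * \<bar>b\<bar> \<le> a\<^sup>2 + b\<^sup>2"
    using sum_squares_bound[of "\<bar>a\<bar>" "\<bar>b\<bar>"] by simp
  moreover have "0 \<le> \<bar>a\<bar> * \<bar>b\<bar>" by simp
  ultimately show ?thesis unfolding abs_mult by linarith
qed

lemma integrable_mult_of_square_integrable:
  fixes u v :: "'a \<Rightarrow> real"
  assumes [measurable]: "u \<in> borel_measurable M" "v \<in> borel_measurable M"
    and "integrable M (\<lambda>x. (u x)\<^sup>2)" "integrable M (\<lambda>x. (v x)\<^sup>2)"
  shows "integrable M (\<lambda>x. u x * v x)"
proof (rule Bochner_Integration.integrable_bound)
  show "integrable M (\<lambda>x. (u x)\<^sup>2 + (v x)\<^sup>2)" using assms(3,4) by simp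
  show "AE x in M. norm (u x * v x) \<le> norm ((u x)\<^sup>2 + (v x)\<^sup>2)"
    using abs_mult_le_sum_squares by simp
qed measurable

lemma abs_integral_mult_le_sqrt:
  fixes u v :: "'a \<Rightarrow> real"
  assumes [measurable]: "u \<in> borel_measurable M" "v \<in> borel_measurable M"
    and iu: "integrable M (\<lambda>x. (u x)\<^sup>2)" and iv: "integrable M (\<lambda>x. (v x)\<^sup>2)"
  shows "\<bar>\<integral>x. u x * v x \<partial>M\<bar> \<le> sqrt (\<integral>x. (u x)\<^sup>2 \<partial>M) * sqrt (\<integral>x. (v x)\<^sup>2 \<partial>M)"
proof -
  have iuv: "integrable M (\<lambda>x. \<bar>u x\<bar> * \<bar>v x\<bar>)"
    using integrable_abs[OF integrable_mult_of_square_integrable[OF assms]] by (simp add: abs_mult)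
  have sq: "(\<integral>\<^sup>+x. ennreal \<bar>w x\<bar> ^ 2 \<partial>M) = ennreal (\<integral>x. (w x)\<^sup>2 \<partial>M)"
    if "integrable M (\<lambda>x. (w x)\<^sup>2)" for w :: "'a \<Rightarrow> real"
    using nn_integral_eq_integral[OF that] by (simp add: ennreal_power)
  have "ennreal ((\<integral>x. \<bar>u x\<bar> * \<bar>v x\<bar> \<partial>M)\<^sup>2)
      = (\<integral>\<^sup>+x. ennreal \<bar>u x\<bar> * ennreal \<bar>v x\<bar> \<partial>M)\<^sup>2"
    using nn_integral_eq_integral[OF iuv] by (simp add: ennreal_mult ennreal_power)
  also have "\<dots> \<le> (\<integral>\<^sup>+x. ennreal \<bar>u x\<bar> ^ 2 \<partial>M) * (\<integral>\<^sup>+x. ennreal \<bar>v x\<bar> ^ 2 \<partial>M)"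
    by (rule Cauchy_Schwarz_nn_integral) measurable
  also have "\<dots> = ennreal ((\<integral>x. (u x)\<^sup>2 \<partial>M) * (\<integral>x. (v x)\<^sup>2 \<partial>M))"
    by (simp add: sq iu iv ennreal_mult)
  finally have "(\<integral>x. \<bar>u x\<bar> * \<bar>v x\<bar> \<partial>M)\<^sup>2 \<le> (\<integral>x. (u x)\<^sup>2 \<partial>M) * (\<integral>x. (v x)\<^sup>2 \<partial>M)"
    by (simp add: ennreal_le_iff)
  then have "(\<integral>x. \<bar>u x\<bar> * \<bar>v x\<bar> \<partial>M) \<le> sqrt (\<integral>x. (u x)\<^sup>2 \<partial>M) * sqrt (\<integral>x. (v x)\<^sup>2 \<partial>M)"
    by (simp add: real_le_rsqrt real_sqrt_mult[symmetric])
  moreover have "\<bar>\<integral>x. u x * v x \<partial>M\<bar> \<le> (\<integral>x. \<bar>u x\<bar> * \<bar>v x\<bar> \<partial>M)"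
    using integral_abs_bound[of M "\<lambda>x. u x * v x"] by (simp add: abs_mult)
  ultimately show ?thesis by linarith
qed

lemma Fatou_integral_le:
  fixes f :: "nat \<Rightarrow> 'a \<Rightarrow> real"
  assumes [measurable]: "\<And>m. f m \<in> borel_measurable M" "g \<in> borel_measurable M"
    and lim: "AE x in M. (\<lambda>m. f m x) \<longlonglongrightarrow> g x"
    and nonneg: "\<And>m x. 0 \<le> f m x"
    and bound: "eventually (\<lambda>m. integrable M (f m) \<and> (\<integral>x. f m x \<partial>M) \<le> B) sequentially"
  shows "integrable M g" and "(\<integral>x. g x \<partial>M) \<le> B"
proof -
  have "(\<integral>\<^sup>+x. ennreal (g x) \<partial>M) = (\<integral>\<^sup>+x. liminf (\<lambda>m. ennreal (f m x)) \<partial>M)"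
    using lim by (intro nn_integral_cong_AE, eventually_elim)
      (metis lim_imp_Liminf tendsto_ennrealI trivial_limit_sequentially)
  also have "\<dots> \<le> liminf (\<lambda>m. \<integral>\<^sup>+x. ennreal (f m x) \<partial>M)"
    by (rule nn_integral_liminf) measurable
  also have "\<dots> \<le> liminf (\<lambda>m. ennreal B)"
    using bound
    by (intro Liminf_mono, eventually_elim) (simp add: nn_integral_eq_integral nonneg ennreal_leI)
  finally have le: "(\<integral>\<^sup>+x. ennreal (g x) \<partial>M) \<le> ennreal B"
    by (simp add: Liminf_const)
  have g_nonneg: "AE x in M. 0 \<le> g x"
    using lim by eventually_elim (rule LIMSEQ_le_const[OF _ exI[of _ 0]], use nonneg in auto)
  show "integrable M g"
    by (rule integrableI_nonneg[OF _ g_nonneg]) (use le in \<open>auto simp: top.not_eq_extremum intro: le_less_trans\<close>)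
  obtain m where "integrable M (f m)" "(\<integral>x. f m x \<partial>M) \<le> B"
    using bound by (auto simp: eventually_sequentially)
  moreover have "0 \<le> (\<integral>x. f m x \<partial>M)"
    by (rule integral_nonneg_AE) (simp add: nonneg)
  ultimately have "0 \<le> B" by linarith
  have "(\<integral>x. g x \<partial>M) = enn2real (\<integral>\<^sup>+x. ennreal (g x) \<partial>M)"
    by (rule integral_eq_nn_integral[OF _ g_nonneg]) simp
  also have "\<dots> \<le> B"
    using enn2real_mono[OF le] \<open>0 \<le> B\<close> by simp
  finally show "(\<integral>x. g x \<partial>M) \<le> B" .
qed

lemma integral_mult_tendsto_0:
  fixes U V :: "nat \<Rightarrow> 'a \<Rightarrow> real"
  assumes [measurable]: "\<And>n. U n \<in> borel_measurable M" "\<And>n. V n \<in> borel_measurable M"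
    and "\<And>n. integrable M (\<lambda>x. (U n x)\<^sup>2)" "\<And>n. integrable M (\<lambda>x. (V n x)\<^sup>2)"
    and U0: "(\<lambda>n. \<integral>x. (U n x)\<^sup>2 \<partial>M) \<longlonglongrightarrow> 0" and V: "(\<lambda>n. \<integral>x. (V n x)\<^sup>2 \<partial>M) \<longlonglongrightarrow> c"
  shows "(\<lambda>n. \<integral>x. U n x * V n x \<partial>M) \<longlonglongrightarrow> 0"
proof (rule Lim_null_comparison[OF always_eventually])
  show "\<forall>n. norm (\<integral>x. U n x * V n x \<partial>M)
      \<le> sqrt (\<integral>x. (U n x)\<^sup>2 \<partial>M) * sqrt (\<integral>x. (V n x)\<^sup>2 \<partial>M)"
    unfolding real_norm_def by (intro allI abs_integral_mult_le_sqrt) (simp_all add: assms)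
  show "(\<lambda>n. sqrt (\<integral>x. (U n x)\<^sup>2 \<partial>M) * sqrt (\<integral>x. (V n x)\<^sup>2 \<partial>M)) \<longlonglongrightarrow> 0"
    using tendsto_mult[OF tendsto_real_sqrt[OF U0] tendsto_real_sqrt[OF V]] by simp
qed

text \<open>\<open>S T = X Y - (X - S) Y - X (Y - T) + (X - S) (Y - T)\<close>, and each correction term
  tends to \<open>0\<close> by Cauchy--Schwarz.\<close>
lemma integral_mult_tendsto_of_L2:
  fixes X Y :: "'a \<Rightarrow> real" and S T :: "nat \<Rightarrow> 'a \<Rightarrow> real"
  assumes [measurable]: "X \<in> borel_measurable M" "Y \<in> borel_measurable M"
      "\<And>n. S n \<in> borel_measurable M" "\<And>n. T n \<in> borel_measurable M"
    and X: "integrable M (\<lambda>x. (X x)\<^sup>2)" and Y: "integrable M (\<lambda>x. (Y x)\<^sup>2)"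
    and XS: "\<And>n. integrable M (\<lambda>x. (X x - S n x)\<^sup>2)" and YT: "\<And>n. integrable M (\<lambda>x. (Y x - T n x)\<^sup>2)"
    and XS0: "(\<lambda>n. \<integral>x. (X x - S n x)\<^sup>2 \<partial>M) \<longlonglongrightarrow> 0"
    and YT0: "(\<lambda>n. \<integral>x. (Y x - T n x)\<^sup>2 \<partial>M) \<longlonglongrightarrow> 0"
  shows "(\<lambda>n. \<integral>x. S n x * T n x \<partial>M) \<longlonglongrightarrow> (\<integral>x. X x * Y x \<partial>M)"
proof -
  note int = integrable_mult_of_square_integrable
  have "(\<lambda>n. \<integral>x. (X x - S n x) * Y x \<partial>M) \<longlonglongrightarrow> 0"
    by (rule integral_mult_tendsto_0[where c="\<integral>x. (Y x)\<^sup>2 \<partial>M"]) (simp_all add: XS0 XS Y)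
  moreover have "(\<lambda>n. \<integral>x. (Y x - T n x) * X x \<partial>M) \<longlonglongrightarrow> 0"
    by (rule integral_mult_tendsto_0[where c="\<integral>x. (X x)\<^sup>2 \<partial>M"]) (simp_all add: YT0 YT X)
  moreover have "(\<lambda>n. \<integral>x. (X x - S n x) * (Y x - T n x) \<partial>M) \<longlonglongrightarrow> 0"
    by (rule integral_mult_tendsto_0[where c=0]) (simp_all add: XS0 YT0 XS YT)
  ultimately have "(\<lambda>n. (\<integral>x. X x * Y x \<partial>M) - (\<integral>x. (X x - S n x) * Y x \<partial>M)
      - (\<integral>x. (Y x - T n x) * X x \<partial>M) + (\<integral>x. (X x - S n x) * (Y x - T n x) \<partial>M))
      \<longlonglongrightarrow> (\<integral>x. X x * Y x \<partial>M) - 0 - 0 + 0"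
    by (intro tendsto_intros)
  moreover have "(\<integral>x. S n x * T n x \<partial>M) = (\<integral>x. X x * Y x \<partial>M) - (\<integral>x. (X x - S n x) * Y x \<partial>M)
      - (\<integral>x. (Y x - T n x) * X x \<partial>M) + (\<integral>x. (X x - S n x) * (Y x - T n x) \<partial>M)" for n
  proof -
    have "(\<lambda>x. S n x * T n x) = (\<lambda>x. X x * Y x - (X x - S n x) * Y x - (Y x - T n x) * X x
        + (X x - S n x) * (Y x - T n x))"
      by (simp add: algebra_simps)
    then show ?thesis
      using int[of X M Y] int[of "\<lambda>x. X x - S n x" M Y] int[of "\<lambda>x. Y x - T n x" M X]
        int[of "\<lambda>x. X x - S n x" M "\<lambda>x. Y x - T n x"] X Y XS YT
      by simp
  qed
  ultimately show ?thesis by simp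
qed

section \<open>Linear processes driven by white noise\<close>

locale white_noise = prob_space +
  fixes \<epsilon> :: "int \<Rightarrow> 'a \<Rightarrow> real" and \<sigma>2 :: "int \<Rightarrow> real"
  assumes noise_measurable [measurable]: "\<And>t. \<epsilon> t \<in> borel_measurable M"
    and noise_indep: "indep_vars (\<lambda>_. borel) \<epsilon> UNIV"
    and noise_square_integrable: "\<And>t. integrable M (\<lambda>\<omega>. (\<epsilon> t \<omega>)\<^sup>2)"
    and noise_mean: "\<And>t. expectation (\<epsilon> t) = 0"
    and noise_variance: "\<And>t. expectation (\<lambda>\<omega>. (\<epsilon> t \<omega>)\<^sup>2) = \<sigma>2 t"
begin

lemma noise_integrable: "integrable M (\<epsilon> t)"
  by (rule square_integrable_imp_integrable[OF noise_measurable noise_square_integrable])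

lemma noise_product:
  "integrable M (\<lambda>\<omega>. \<epsilon> a \<omega> * \<epsilon> b \<omega>)"
  "expectation (\<lambda>\<omega>. \<epsilon> a \<omega> * \<epsilon> b \<omega>) = (if a = b then \<sigma>2 a else 0)"
proof -
  have "integrable M (\<lambda>\<omega>. \<epsilon> a \<omega> * \<epsilon> b \<omega>) \<and>
      expectation (\<lambda>\<omega>. \<epsilon> a \<omega> * \<epsilon> b \<omega>) = (if a = b then \<sigma>2 a else 0)"
  proof (cases "a = b")
    case True
    then show ?thesis
      using noise_square_integrable[of a] noise_variance[of a] by (simp add: power2_eq_square)
  next
    case False
    have indep: "indep_vars (\<lambda>_. borel) \<epsilon> {a, b}"
      by (rule indep_vars_subset[OF noise_indep]) auto
    have "(\<lambda>\<omega>. \<Prod>i\<in>{a, b}. \<epsilon> i \<omega>) = (\<lambda>\<omega>. \<epsilon> a \<omega> * \<epsilon> b \<omega>)"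
      using False by simp
    with indep_vars_integrable[OF _ indep] indep_vars_lebesgue_integral[OF _ indep]
    show ?thesis
      using False noise_integrable noise_mean by simp
  qed
  then show "integrable M (\<lambda>\<omega>. \<epsilon> a \<omega> * \<epsilon> b \<omega>)"
    "expectation (\<lambda>\<omega>. \<epsilon> a \<omega> * \<epsilon> b \<omega>) = (if a = b then \<sigma>2 a else 0)"
    by auto
qed

lemma noise_combination_product:
  assumes "finite A" "finite B"
  shows "integrable M (\<lambda>\<omega>. (\<Sum>j\<in>A. c j * \<epsilon> (f j) \<omega>) * (\<Sum>l\<in>B. e l * \<epsilon> (g l) \<omega>))"
    and "expectation (\<lambda>\<omega>. (\<Sum>j\<in>A. c j * \<epsilon> (f j) \<omega>) * (\<Sum>l\<in>B. e l * \<epsilon> (g l) \<omega>))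
      = (\<Sum>j\<in>A. \<Sum>l\<in>B. c j * e l * (if f j = g l then \<sigma>2 (f j) else 0))"
proof -
  have eq: "(\<lambda>\<omega>. (\<Sum>j\<in>A. c j * \<epsilon> (f j) \<omega>) * (\<Sum>l\<in>B. e l * \<epsilon> (g l) \<omega>))
      = (\<lambda>\<omega>. \<Sum>j\<in>A. \<Sum>l\<in>B. c j * e l * (\<epsilon> (f j) \<omega> * \<epsilon> (g l) \<omega>))"
    by (simp add: sum_product mult_ac)
  show "integrable M (\<lambda>\<omega>. (\<Sum>j\<in>A. c j * \<epsilon> (f j) \<omega>) * (\<Sum>l\<in>B. e l * \<epsilon> (g l) \<omega>))"
    unfolding eq by (intro Bochner_Integration.integrable_sum integrable_mult_right noise_product(1))
  show "expectation (\<lambda>\<omega>. (\<Sum>j\<in>A. c j * \<epsilon> (f j) \<omega>) * (\<Sum>l\<in>B. e l * \<epsilon> (g l) \<omega>))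
      = (\<Sum>j\<in>A. \<Sum>l\<in>B. c j * e l * (if f j = g l then \<sigma>2 (f j) else 0))"
    unfolding eq
    by (simp add: Bochner_Integration.integral_sum Bochner_Integration.integrable_sum
        integrable_mult_right noise_product)
qed

end

locale causal_linear_process = white_noise +
  fixes \<psi> :: "int \<Rightarrow> nat \<Rightarrow> real" and X :: "int \<Rightarrow> 'a \<Rightarrow> real"
  assumes variance_bounded: "bdd_above (range \<sigma>2)"
    and coefficients_square_summable: "\<And>t. summable (\<lambda>j. (\<psi> t j)\<^sup>2)"
    and X_measurable [measurable]: "\<And>t. X t \<in> borel_measurable M"
    and X_MA: "\<And>t. AE \<omega> in M. (\<lambda>n. \<Sum>j<n. \<psi> t j * \<epsilon> (t - int j) \<omega>) \<longlonglongrightarrow> X t \<omega>"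
begin

definition partial_sum :: "int \<Rightarrow> nat \<Rightarrow> 'a \<Rightarrow> real" where
  "partial_sum t n \<omega> = (\<Sum>j<n. \<psi> t j * \<epsilon> (t - int j) \<omega>)"

definition tail_bound :: "int \<Rightarrow> nat \<Rightarrow> real" where
  "tail_bound t n = (SUP s. \<sigma>2 s) * ((\<Sum>j. (\<psi> t j)\<^sup>2) - (\<Sum>j<n. (\<psi> t j)\<^sup>2))"

lemma partial_sum_measurable [measurable]: "partial_sum t n \<in> borel_measurable M"
  unfolding partial_sum_def by measurable

lemma partial_sum_0 [simp]: "partial_sum t 0 \<omega> = 0"
  by (simp add: partial_sum_def)

lemma variance_le_Sup: "\<sigma>2 t \<le> (SUP s. \<sigma>2 s)"
  by (rule cSUP_upper[OF UNIV_I variance_bounded])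

lemma variance_nonneg: "0 \<le> \<sigma>2 t"
  using noise_variance[of t] by (metis integral_nonneg_AE AE_I2 zero_le_power2)

lemma partial_sum_increment:
  assumes "n \<le> m"
  shows "integrable M (\<lambda>\<omega>. (partial_sum t m \<omega> - partial_sum t n \<omega>)\<^sup>2)"
    and "expectation (\<lambda>\<omega>. (partial_sum t m \<omega> - partial_sum t n \<omega>)\<^sup>2) \<le> tail_bound t n"
proof -
  have diff: "partial_sum t m \<omega> - partial_sum t n \<omega> = (\<Sum>j\<in>{n..<m}. \<psi> t j * \<epsilon> (t - int j) \<omega>)" for \<omega>
    unfolding partial_sum_def using sum.atLeastLessThan_concat[OF zero_le assms, of "\<lambda>j. \<psi> t j * \<epsilon> (t - int j) \<omega>"]
    by (simp add: lessThan_atLeast0)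
  note prod = noise_combination_product[where A="{n..<m}" and B="{n..<m}" and c="\<psi> t" and e="\<psi> t"
      and f="\<lambda>j. t - int j" and g="\<lambda>j. t - int j", OF finite_atLeastLessThan finite_atLeastLessThan]
  show "integrable M (\<lambda>\<omega>. (partial_sum t m \<omega> - partial_sum t n \<omega>)\<^sup>2)"
    using prod(1) by (simp add: diff power2_eq_square)
  have "expectation (\<lambda>\<omega>. (partial_sum t m \<omega> - partial_sum t n \<omega>)\<^sup>2)
      = (\<Sum>j\<in>{n..<m}. (\<psi> t j)\<^sup>2 * \<sigma>2 (t - int j))"
    using prod(2) by (simp add: diff power2_eq_square if_distrib sum.If_cases)
  also have "\<dots> \<le> (\<Sum>j\<in>{n..<m}. (\<psi> t j)\<^sup>2 * (SUP s. \<sigma>2 s))"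
    by (intro sum_mono mult_left_mono variance_le_Sup) simp
  also have "\<dots> = (SUP s. \<sigma>2 s) * ((\<Sum>j<m. (\<psi> t j)\<^sup>2) - (\<Sum>j<n. (\<psi> t j)\<^sup>2))"
  proof -
    have "(\<Sum>j\<in>{n..<m}. (\<psi> t j)\<^sup>2) = (\<Sum>j<m. (\<psi> t j)\<^sup>2) - (\<Sum>j<n. (\<psi> t j)\<^sup>2)"
      using sum.atLeastLessThan_concat[OF zero_le assms, of "\<lambda>j. (\<psi> t j)\<^sup>2"]
      by (simp add: lessThan_atLeast0)
    then show ?thesis by (simp add: sum_distrib_left[symmetric] mult.commute)
  qed
  also have "\<dots> \<le> tail_bound t n"
    unfolding tail_bound_def using sum_le_suminf[OF coefficients_square_summable, of "{..<m}" t]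
    by (intro mult_left_mono order_trans[OF variance_nonneg variance_le_Sup]) auto
  finally show "expectation (\<lambda>\<omega>. (partial_sum t m \<omega> - partial_sum t n \<omega>)\<^sup>2) \<le> tail_bound t n" .
qed

lemma tail_bound_tendsto_0: "tail_bound t \<longlonglongrightarrow> 0"
proof -
  have "(\<lambda>n. (SUP s. \<sigma>2 s) * ((\<Sum>j. (\<psi> t j)\<^sup>2) - (\<Sum>j<n. (\<psi> t j)\<^sup>2)))
      \<longlonglongrightarrow> (SUP s. \<sigma>2 s) * ((\<Sum>j. (\<psi> t j)\<^sup>2) - (\<Sum>j. (\<psi> t j)\<^sup>2))"
    by (intro tendsto_intros summable_LIMSEQ coefficients_square_summable)
  then show ?thesis by (simp add: tail_bound_def[abs_def])
qed

lemma X_minus_partial_sum: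
  shows "integrable M (\<lambda>\<omega>. (X t \<omega> - partial_sum t n \<omega>)\<^sup>2)"
    and "expectation (\<lambda>\<omega>. (X t \<omega> - partial_sum t n \<omega>)\<^sup>2) \<le> tail_bound t n"
proof -
  have lim: "AE \<omega> in M. (\<lambda>m. (partial_sum t m \<omega> - partial_sum t n \<omega>)\<^sup>2)
      \<longlonglongrightarrow> (X t \<omega> - partial_sum t n \<omega>)\<^sup>2"
    using X_MA[of t] by eventually_elim (auto intro!: tendsto_intros simp: partial_sum_def)
  have "eventually (\<lambda>m. integrable M (\<lambda>\<omega>. (partial_sum t m \<omega> - partial_sum t n \<omega>)\<^sup>2) \<and>
      expectation (\<lambda>\<omega>. (partial_sum t m \<omega> - partial_sum t n \<omega>)\<^sup>2) \<le> tail_bound t n) sequentially"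
    using eventually_ge_at_top[of n] by eventually_elim (intro conjI partial_sum_increment)
  from Fatou_integral_le[OF _ _ lim _ this]
  show "integrable M (\<lambda>\<omega>. (X t \<omega> - partial_sum t n \<omega>)\<^sup>2)"
    and "expectation (\<lambda>\<omega>. (X t \<omega> - partial_sum t n \<omega>)\<^sup>2) \<le> tail_bound t n"
    by simp_all
qed

lemma partial_sum_L2_convergence:
  "(\<lambda>n. expectation (\<lambda>\<omega>. (X t \<omega> - partial_sum t n \<omega>)\<^sup>2)) \<longlonglongrightarrow> 0"
  by (rule tendsto_sandwich[OF always_eventually always_eventually tendsto_const tail_bound_tendsto_0[of t]])
     (simp_all add: X_minus_partial_sum(2))

lemma X_square_integrable: "integrable M (\<lambda>\<omega>. (X t \<omega>)\<^sup>2)"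
  using X_minus_partial_sum(1)[of t 0] by simp

lemma partial_sum_product_tendsto:
  "(\<lambda>n. expectation (\<lambda>\<omega>. partial_sum t n \<omega> * partial_sum s n \<omega>)) \<longlonglongrightarrow> expectation (\<lambda>\<omega>. X t \<omega> * X s \<omega>)"
  by (rule integral_mult_tendsto_of_L2)
     (simp_all add: X_square_integrable X_minus_partial_sum(1) partial_sum_L2_convergence)

lemma X_mean: "expectation (X t) = 0"
proof -
  have "(\<lambda>n. expectation (\<lambda>\<omega>. partial_sum t n \<omega> * 1)) \<longlonglongrightarrow> expectation (\<lambda>\<omega>. X t \<omega> * 1)"
    by (rule integral_mult_tendsto_of_L2)
       (simp_all add: X_square_integrable X_minus_partial_sum(1) partial_sum_L2_convergence)
  moreover have "expectation (partial_sum t n) = 0" for n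
    unfolding partial_sum_def[abs_def]
    by (simp add: Bochner_Integration.integral_sum Bochner_Integration.integrable_sum
        integrable_mult_right noise_integrable noise_mean)
  ultimately show ?thesis
    by (simp add: LIMSEQ_const_iff)
qed

lemma summable_lagged_coefficient_product:
  "summable (\<lambda>l. \<sigma>2 (s - int l) * (\<psi> t (l + N) * \<psi> s l))"
proof (rule summable_comparison_test)
  show "summable (\<lambda>l. (SUP r. \<sigma>2 r) * ((\<psi> t (l + N))\<^sup>2 + (\<psi> s l)\<^sup>2))"
    using coefficients_square_summable[of t] coefficients_square_summable[of s]
    by (intro summable_mult summable_add) (simp_all add: summable_iff_shift[where f="\<lambda>j. (\<psi> t j)\<^sup>2"])
  show "\<exists>N'. \<forall>l\<ge>N'. norm (\<sigma>2 (s - int l) * (\<psi> t (l + N) * \<psi> s l))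
      \<le> (SUP r. \<sigma>2 r) * ((\<psi> t (l + N))\<^sup>2 + (\<psi> s l)\<^sup>2)"
  proof (intro exI[of _ 0] allI impI)
    fix l
    have "norm (\<sigma>2 (s - int l) * (\<psi> t (l + N) * \<psi> s l)) = \<sigma>2 (s - int l) * \<bar>\<psi> t (l + N) * \<psi> s l\<bar>"
      using variance_nonneg by (simp add: abs_mult)
    also have "\<dots> \<le> (SUP r. \<sigma>2 r) * ((\<psi> t (l + N))\<^sup>2 + (\<psi> s l)\<^sup>2)"
      by (rule mult_mono[OF variance_le_Sup abs_mult_le_sum_squares order_trans[OF variance_nonneg variance_le_Sup] abs_ge_zero])
    finally show "norm (\<sigma>2 (s - int l) * (\<psi> t (l + N) * \<psi> s l))
        \<le> (SUP r. \<sigma>2 r) * ((\<psi> t (l + N))\<^sup>2 + (\<psi> s l)\<^sup>2)" .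
  qed
qed

lemma covariance_eq_suminf:
  "expectation (\<lambda>\<omega>. X (s + int N) \<omega> * X s \<omega>)
    = (\<Sum>l. \<sigma>2 (s - int l) * (\<psi> (s + int N) (l + N) * \<psi> s l))"
proof -
  define t where "t = s + int N"
  define F where "F l = \<sigma>2 (s - int l) * (\<psi> t (l + N) * \<psi> s l)" for l
  have "expectation (\<lambda>\<omega>. partial_sum t n \<omega> * partial_sum s n \<omega>)
      = (\<Sum>j<n. \<Sum>l<n. \<psi> t j * \<psi> s l * (if t - int j = s - int l then \<sigma>2 (t - int j) else 0))" for n
    unfolding partial_sum_def by (rule noise_combination_product(2)) simp_all
  also have "\<dots> n = (\<Sum>l<n - N. F l)" for n
  proof -
    have "(\<Sum>j<n. \<psi> t j * \<psi> s l * (if t - int j = s - int l then \<sigma>2 (t - int j) else 0))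
        = (\<Sum>j<n. if j = l + N then F l else 0)" for l
      by (rule sum.cong) (auto simp: t_def F_def)
    then have "(\<Sum>j<n. \<Sum>l<n. \<psi> t j * \<psi> s l * (if t - int j = s - int l then \<sigma>2 (t - int j) else 0))
        = (\<Sum>l\<in>{..<n} \<inter> {l. l + N < n}. F l)"
      by (subst sum.swap) (simp add: sum.inter_restrict)
    also have "{..<n} \<inter> {l. l + N < n} = {..<n - N}" by auto
    finally show ?thesis .
  qed
  finally have "(\<lambda>n. expectation (\<lambda>\<omega>. partial_sum t (n + N) \<omega> * partial_sum s (n + N) \<omega>)) \<longlonglongrightarrow> suminf F"
    using summable_LIMSEQ[OF summable_lagged_coefficient_product[of s t N]] by (simp add: F_def[abs_def])
  then have "(\<lambda>n. expectation (\<lambda>\<omega>. partial_sum t n \<omega> * partial_sum s n \<omega>)) \<longlonglongrightarrow> suminf F"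
    by (rule LIMSEQ_offset)
  with partial_sum_product_tendsto show ?thesis
    unfolding t_def F_def using LIMSEQ_unique by blast
qed

end

section \<open>Periodic ARFIMA processes\<close>

lemma periodic_int_shift:
  assumes "\<And>t. f (t + p) = f (t::int)"
  shows "f (t + p * m) = f t"
proof -
  have nat_shift: "f (u + p * int n) = f u" for u n
  proof (induction n)
    case (Suc n)
    have "f (u + p * int (Suc n)) = f ((u + p * int n) + p)" by (simp add: algebra_simps)
    with Suc show ?case by (simp add: assms)
  qed simp
  show ?thesis
  proof (cases "m \<ge> 0")
    case True
    then show ?thesis using nat_shift[of t "nat m"] by simp
  next
    case False
    then show ?thesis using nat_shift[of "t + p * m" "nat (- m)"] by simp
  qed
qed

lemma periodic_int_representative:
  assumes "\<And>t. f (t + p) = f (t::int)" "p > 0"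
  shows "f t \<in> f ` {1..p}"
proof -
  define i where "i = (t - 1) mod p + 1"
  have "t = i + p * ((t - 1) div p)" unfolding i_def by (simp add: algebra_simps)
  then have "f t = f i" using periodic_int_shift[of f p i, OF assms(1)] by metis
  moreover have "i \<in> {1..p}"
    unfolding i_def using pos_mod_bound[OF assms(2), of "t - 1"] pos_mod_sign[OF assms(2), of "t - 1"] by simp
  ultimately show ?thesis by blast
qed

locale periodic_arfima = prob_space M for M :: "'a measure" +
  fixes p :: int and d \<sigma>2 :: "int \<Rightarrow> real" and \<epsilon> X :: "int \<Rightarrow> 'a \<Rightarrow> real"
  assumes period: "p \<ge> 2"
    and d_periodic: "\<And>t. d (t + p) = d t"
    and d_range: "\<And>i. i \<in> {1..p} \<Longrightarrow> 0 < d i \<and> d i < 1/2"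
    and variance_periodic: "\<And>t. \<sigma>2 (t + p) = \<sigma>2 t"
    and variance_pos: "\<And>i. i \<in> {1..p} \<Longrightarrow> \<sigma>2 i > 0"
    and noise_measurable: "\<And>t. \<epsilon> t \<in> borel_measurable M"
    and noise_indep: "indep_vars (\<lambda>_. borel) \<epsilon> UNIV"
    and noise_square_integrable: "\<And>t. integrable M (\<lambda>\<omega>. (\<epsilon> t \<omega>)\<^sup>2)"
    and noise_mean: "\<And>t. expectation (\<epsilon> t) = 0"
    and noise_variance: "\<And>t. expectation (\<lambda>\<omega>. (\<epsilon> t \<omega>)\<^sup>2) = \<sigma>2 t"
    and X_measurable: "\<And>t. X t \<in> borel_measurable M"
    and X_MA: "\<And>t. AE \<omega> in M. (\<lambda>n. \<Sum>j<n. arfima_psi (d t) j * \<epsilon> (t - int j) \<omega>) \<longlonglongrightarrow> X t \<omega>"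
begin

lemma d_pos: "0 < d t" and d_less_half: "d t < 1/2"
  using periodic_int_representative[of d p t, OF d_periodic] period d_range by auto

lemma variance_pos_all: "\<sigma>2 t > 0"
  using periodic_int_representative[of \<sigma>2 p t, OF variance_periodic] period variance_pos by auto

sublocale causal_linear_process M \<epsilon> \<sigma>2 "\<lambda>t. arfima_psi (d t)" X
proof (unfold_locales)
  have "range \<sigma>2 \<subseteq> \<sigma>2 ` {1..p}"
    using periodic_int_representative[of \<sigma>2 p, OF variance_periodic] period by auto
  then show "bdd_above (range \<sigma>2)"
    by (meson bdd_above_finite bdd_above_mono finite_atLeastAtMost_int finite_imageI)
  show "summable (\<lambda>j. (arfima_psi (d t) j)\<^sup>2)" for t
    using summable_arfima_lag_product[of "d t" "d t" 0] d_pos[of t] d_less_half[of t]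
    by (simp add: power2_eq_square)
qed (use noise_measurable noise_indep noise_square_integrable noise_mean noise_variance
      X_measurable X_MA in auto)

lemma covariance_periodic:
  "expectation (\<lambda>\<omega>. X (t + p * m) \<omega> * X (s + p * m) \<omega>) = expectation (\<lambda>\<omega>. X t \<omega> * X s \<omega>)"
proof -
  have shift: "expectation (\<lambda>\<omega>. X (u + p * m + int N) \<omega> * X (u + p * m) \<omega>)
      = expectation (\<lambda>\<omega>. X (u + int N) \<omega> * X u \<omega>)" for u N
  proof -
    have "\<sigma>2 (u + p * m - int l) = \<sigma>2 (u - int l)" for l
      using periodic_int_shift[of \<sigma>2 p "u - int l" m, OF variance_periodic] by (simp add: algebra_simps)
    moreover have "d (u + p * m + int N) = d (u + int N)"
      using periodic_int_shift[of d p "u + int N" m, OF d_periodic] by (simp add: algebra_simps)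
    moreover have "d (u + p * m) = d u"
      using periodic_int_shift[of d p u m, OF d_periodic] .
    ultimately show ?thesis
      using covariance_eq_suminf[of "u + p * m" N] covariance_eq_suminf[of u N] by simp
  qed
  show ?thesis
  proof (cases "s \<le> t")
    case True
    then show ?thesis using shift[of s "nat (t - s)"] by (simp add: algebra_simps)
  next
    case False
    then show ?thesis using shift[of t "nat (s - t)"] by (simp add: algebra_simps)
  qed
qed

lemma covariance_eq_weighted_lag_sum:
  assumes "s \<le> t"
  shows "expectation (\<lambda>\<omega>. X t \<omega> * X s \<omega>)
    = arfima_weighted_lag_sum (d t) (d s) (\<lambda>l. \<sigma>2 (s - int l)) (nat (t - s))"
  using covariance_eq_suminf[of s "nat (t - s)"] assms by (simp add: arfima_weighted_lag_sum_def)

definition cov_constant :: "int \<Rightarrow> int \<Rightarrow> real" where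
  "cov_constant i k = (\<Sum>r<nat p. \<sigma>2 (k - int r)) / real (nat p) * arfima_lag_sum (d i) (d k) 0
     * (Gamma (1 - d k) / Gamma (d i)) * real (nat p) powr (d i + d k - 1)"

lemma cov_constant_pos: "cov_constant i k > 0"
proof -
  have "d i > 0" "d k > 0" "d i + d k < 1" "1 - d k > 0"
    using d_pos d_less_half[of i] d_less_half[of k] by auto
  moreover have "(\<Sum>r<nat p. \<sigma>2 (k - int r)) > 0"
    using period variance_pos_all by (intro sum_pos) (auto simp: lessThan_empty_iff)
  ultimately show ?thesis
    using period arfima_lag_sum_0_pos[of "d i" "d k"] by (simp add: cov_constant_def)
qed

lemma covariance_asymp_equiv:
  assumes "i \<in> {1..p}" "k \<in> {1..p}"
  shows "(\<lambda>h. expectation (\<lambda>\<omega>. X (i + p * int h) \<omega> * X k \<omega>))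
    \<sim>[at_top] (\<lambda>h. cov_constant i k * real h powr (d i + d k - 1))"
proof -
  define q where "q = nat p"
  define w where "w l = \<sigma>2 (k - int l)" for l
  have q: "q > 0" "int q = p" using period by (auto simp: q_def)
  have ab: "d i > 0" "d k > 0" "d i + d k < 1"
    using d_pos d_less_half[of i] d_less_half[of k] by auto
  have w_periodic: "w (l + q) = w l" for l
    unfolding w_def using variance_periodic[of "k - int l - p"] q by (simp add: algebra_simps)
  have "eventually (\<lambda>h. expectation (\<lambda>\<omega>. X (i + p * int h) \<omega> * X k \<omega>)
      = arfima_weighted_lag_sum (d i) (d k) w (nat (int q * int h + (i - k)))) at_top"
    using eventually_ge_at_top[of "1::nat"]
  proof eventually_elim
    case (elim h)
    have "p \<le> p * int h" "1 \<le> i" "k \<le> p" using elim period assms by auto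
    then have "k \<le> i + p * int h" by linarith
    moreover have "d (i + p * int h) = d i"
      by (rule periodic_int_shift[of d p, OF d_periodic])
    moreover have "nat (i + p * int h - k) = nat (int q * int h + (i - k))"
      using q(2) by (simp add: algebra_simps)
    ultimately show ?case
      using covariance_eq_weighted_lag_sum[of k "i + p * int h"] by (simp add: w_def[abs_def])
  qed
  then have "(\<lambda>h. expectation (\<lambda>\<omega>. X (i + p * int h) \<omega> * X k \<omega>))
      \<sim>[at_top] (\<lambda>h. arfima_weighted_lag_sum (d i) (d k) w (nat (int q * int h + (i - k))))"
    by (rule asymp_equiv_refl_ev)
  also have "\<dots> \<sim>[at_top] (\<lambda>h. cov_constant i k * real h powr (d i + d k - 1))"
  proof -
    have "w l \<ge> 0" for l
      unfolding w_def using variance_pos_all less_imp_le by blast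
    moreover have "(\<Sum>r<q. w r) > 0"
      unfolding w_def using q(1) variance_pos_all by (intro sum_pos) auto
    ultimately show ?thesis
      using asymp_equiv_powr_compose_affine[OF arfima_weighted_lag_sum_asymp_equiv[of "d i" "d k" q w,
          OF ab q(1) w_periodic] q(1)]
      by (simp add: cov_constant_def w_def q_def)
  qed
  finally show ?thesis .
qed

end

theorem proposition2p1:
  fixes M :: "'a measure"
    and p :: int
    and d :: "int \<Rightarrow> real"
    and \<sigma>2 :: "int \<Rightarrow> real"
    and \<epsilon> :: "int \<Rightarrow> 'a \<Rightarrow> real"
    and X :: "int \<Rightarrow> 'a \<Rightarrow> real"
  assumes "prob_space M"
    and "p \<ge> 2"
    and d_per: "\<And>t. d (t + p) = d t"
    and d_range: "\<And>i. i \<in> {1..p} \<Longrightarrow> 0 < d i \<and> d i < 1/2"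
    and \<sigma>_per: "\<And>t. \<sigma>2 (t + p) = \<sigma>2 t"
    and \<sigma>_pos: "\<And>i. i \<in> {1..p} \<Longrightarrow> \<sigma>2 i > 0"
    and \<epsilon>_rv: "\<And>t. \<epsilon> t \<in> borel_measurable M"
    and \<epsilon>_indep: "prob_space.indep_vars M (\<lambda>_. borel) \<epsilon> UNIV"
    and \<epsilon>_L2: "\<And>t. integrable M (\<lambda>\<omega>. (\<epsilon> t \<omega>)\<^sup>2)"
    and \<epsilon>_mean: "\<And>t. prob_space.expectation M (\<epsilon> t) = 0"
    and \<epsilon>_var: "\<And>t. prob_space.expectation M (\<lambda>\<omega>. (\<epsilon> t \<omega>)\<^sup>2) = \<sigma>2 t"
    and X_rv: "\<And>t. X t \<in> borel_measurable M"
    and X_MA: "\<And>t. AE \<omega> in M.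
        (\<lambda>n. \<Sum>j<n. arfima_psi (d t) j * \<epsilon> (t - int j) \<omega>) \<longlonglongrightarrow> X t \<omega>"
  shows "\<exists>R :: int \<Rightarrow> int \<Rightarrow> real.
     (\<forall>i\<in>{1..p}. \<forall>k\<in>{1..p}. R i k > 0) \<and>
     (\<forall>t. integrable M (\<lambda>\<omega>. (X t \<omega>)\<^sup>2) \<and> prob_space.expectation M (X t) = 0) \<and>
     (\<forall>i\<in>{1..p}. \<forall>k\<in>{1..p}. \<forall>m h.
        prob_space.expectation M (\<lambda>\<omega>. X (i + p * (m + h)) \<omega> * X (k + p * m) \<omega>)
        = prob_space.expectation M (\<lambda>\<omega>. X (i + p * h) \<omega> * X k \<omega>)) \<and>
     (\<forall>i\<in>{1..p}. \<forall>k\<in>{1..p}.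
        (\<lambda>h::nat. prob_space.expectation M (\<lambda>\<omega>. X (i + p * int h) \<omega> * X k \<omega>))
          \<sim>[at_top] (\<lambda>h. \<sigma>2 i * R i k * real h powr (d i + d k - 1)))"
proof -
  interpret periodic_arfima M p d \<sigma>2 \<epsilon> X
    by (intro periodic_arfima.intro periodic_arfima_axioms.intro; rule assms)
  have "\<sigma>2 i * (cov_constant i k / \<sigma>2 i) = cov_constant i k" for i k
    using variance_pos_all[of i] by simp
  moreover have "expectation (\<lambda>\<omega>. X (i + p * (m + h)) \<omega> * X (k + p * m) \<omega>)
      = expectation (\<lambda>\<omega>. X (i + p * h) \<omega> * X k \<omega>)" for i k m h
  proof -
    have "i + p * (m + h) = (i + p * h) + p * m" by (simp add: algebra_simps)
    then show ?thesis by (simp only: covariance_periodic)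
  qed
  ultimately show ?thesis
    using cov_constant_pos variance_pos_all X_square_integrable X_mean covariance_asymp_equiv
    by (intro exI[of _ "\<lambda>i k. cov_constant i k / \<sigma>2 i"]) auto
qed

end
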